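(* For every infinite set $X$ there exists a generic metric space of cardinality $\#X$. Specifically: fix a well-order $\le$ on $X$; let $G_o$ be the oriented graph on $X$ with an edge $(x,y)$ whenever $x<y$; let $H_o$ be obtained by replacing each oriented edge $e=(x,y)$ of $G_o$ with three new vertices $u_e,v_e,w_e$ and the four oriented edges $(x,u_e),(u_e,v_e),(v_e,y),(v_e,w_e)$; let $H=(V_H,E_H)$ be the underlying non-oriented graph. Then $H$ has trivial automorphism group, $\#V_H=\#X$, and for any $\varepsilon\in(0,1)$ the metric on $V_H$ with distance $1$ between distinct adjacent vertices and $1+\varepsilon$ between distinct non-adjacent vertices is a generic metric space with $s(V_H)=1$, $t(V_H)=1-\varepsilon$ and $e(V_H)=\varepsilon$.
   Context: For a metric space $M$ with $\#M\ge3$: $s(M)=\inf\{|xx'|: x\ne x'\}$; $t(M)=\inf\{|xx'|+|x'x''|-|xx''|: x,x',x''\text{ pairwise distinct}\}$; $e(M)=\inf\{\operatorname{dis}f: f\colon M\to M \text{ bijective}, f\ne\mathrm{id}\}$, where $\operatorname{dis}f=\sup_{x,x'}||xx'|-|f(x)f(x')||$. $M$ is called generic if $\#M\ge3$ and $s(M),t(M),e(M)$ are all positive. *)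

theory Defs
  imports Main "HOL-Library.Extended_Real" "HOL-Library.Equipollence"
begin

definition metric_on :: "'a set \<Rightarrow> ('a \<Rightarrow> 'a \<Rightarrow> real) \<Rightarrow> bool" where
  "metric_on M d \<longleftrightarrow>
     (\<forall>x\<in>M. \<forall>y\<in>M. d x y \<ge> 0 \<and> (d x y = 0 \<longleftrightarrow> x = y) \<and> d x y = d y x) \<and>
     (\<forall>x\<in>M. \<forall>y\<in>M. \<forall>z\<in>M. d x z \<le> d x y + d y z)"

definition s_inv :: "'a set \<Rightarrow> ('a \<Rightarrow> 'a \<Rightarrow> real) \<Rightarrow> real" where
  "s_inv M d = Inf {d x x' | x x'. x \<in> M \<and> x' \<in> M \<and> x \<noteq> x'}"

definition t_inv :: "'a set \<Rightarrow> ('a \<Rightarrow> 'a \<Rightarrow> real) \<Rightarrow> real" where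
  "t_inv M d = Inf {d x x' + d x' x'' - d x x'' | x x' x''.
       x \<in> M \<and> x' \<in> M \<and> x'' \<in> M \<and> x \<noteq> x' \<and> x' \<noteq> x'' \<and> x \<noteq> x''}"

text \<open>Distortion of a map (possibly infinite, hence extended real).\<close>
definition dis :: "'a set \<Rightarrow> ('a \<Rightarrow> 'a \<Rightarrow> real) \<Rightarrow> ('a \<Rightarrow> 'a) \<Rightarrow> ereal" where
  "dis M d f = (SUP p \<in> M \<times> M. ereal \<bar>d (fst p) (snd p) - d (f (fst p)) (f (snd p))\<bar>)"

definition e_inv :: "'a set \<Rightarrow> ('a \<Rightarrow> 'a \<Rightarrow> real) \<Rightarrow> ereal" where
  "e_inv M d = (INF f \<in> {f. bij_betw f M M \<and> (\<exists>x\<in>M. f x \<noteq> x)}. dis M d f)"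

definition generic :: "'a set \<Rightarrow> ('a \<Rightarrow> 'a \<Rightarrow> real) \<Rightarrow> bool" where
  "generic M d \<longleftrightarrow> metric_on M d \<and> (infinite M \<or> card M \<ge> 3) \<and>
     s_inv M d > 0 \<and> t_inv M d > 0 \<and> e_inv M d > 0"

text \<open>Vertices of H: original points, and for each oriented edge (x,y) three new vertices.\<close>
datatype 'a hvert = Orig 'a | UV 'a 'a | VV 'a 'a | WV 'a 'a

definition sless :: "'a rel \<Rightarrow> 'a \<Rightarrow> 'a \<Rightarrow> bool" where
  "sless r x y \<longleftrightarrow> (x, y) \<in> r \<and> x \<noteq> y"

definition Go_edges :: "'a set \<Rightarrow> 'a rel \<Rightarrow> ('a \<times> 'a) set" where
  "Go_edges X r = {(x, y). x \<in> X \<and> y \<in> X \<and> sless r x y}"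

definition VH :: "'a set \<Rightarrow> 'a rel \<Rightarrow> 'a hvert set" where
  "VH X r = Orig ` X \<union> (\<Union>(x, y) \<in> Go_edges X r. {UV x y, VV x y, WV x y})"

definition Ho_edges :: "'a set \<Rightarrow> 'a rel \<Rightarrow> ('a hvert \<times> 'a hvert) set" where
  "Ho_edges X r = (\<Union>(x, y) \<in> Go_edges X r.
      {(Orig x, UV x y), (UV x y, VV x y), (VV x y, Orig y), (VV x y, WV x y)})"

definition adjH :: "'a set \<Rightarrow> 'a rel \<Rightarrow> 'a hvert \<Rightarrow> 'a hvert \<Rightarrow> bool" where
  "adjH X r a b \<longleftrightarrow> (a, b) \<in> Ho_edges X r \<or> (b, a) \<in> Ho_edges X r"

definition graph_aut :: "'v set \<Rightarrow> ('v \<Rightarrow> 'v \<Rightarrow> bool) \<Rightarrow> ('v \<Rightarrow> 'v) \<Rightarrow> bool" where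
  "graph_aut V adj f \<longleftrightarrow> bij_betw f V V \<and>
     (\<forall>a\<in>V. \<forall>b\<in>V. adj (f a) (f b) \<longleftrightarrow> adj a b)"

definition dH :: "'a set \<Rightarrow> 'a rel \<Rightarrow> real \<Rightarrow> 'a hvert \<Rightarrow> 'a hvert \<Rightarrow> real" where
  "dH X r \<epsilon> a b = (if a = b then 0 else if adjH X r a b then 1 else 1 + \<epsilon>)"

end

theory Submission
  imports Defs
begin

text \<open>
  Since \<open>d\<close> takes only the values \<open>0\<close>, \<open>1\<close> and \<open>1 + \<epsilon>\<close>, we get \<open>s = 1\<close>, and \<open>t = 1 - \<epsilon>\<close>
  is attained on any induced path \<open>a - b - c\<close>. A bijection changes every distance by \<open>0\<close> or
  \<open>\<epsilon>\<close>, and by \<open>\<epsilon>\<close> somewhere unless it is a graph automorphism, so \<open>e = \<epsilon>\<close> as soon as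
  the graph is rigid. The graph \<open>H\<close> is rigid because the degrees (infinite, 2, 3, 1)
  tell the four kinds of vertices apart: an automorphism therefore permutes \<open>X\<close>, maps each
  gadget \<open>x - u - v - y\<close> with pendant \<open>w\<close> at \<open>v\<close> to a gadget, and so preserves the orientation
  of the edges of \<open>G\<^sub>o\<close>, i.e. the well-order; an order automorphism of a well-order is trivial.
\<close>

definition graph_dist :: "('v \<Rightarrow> 'v \<Rightarrow> bool) \<Rightarrow> real \<Rightarrow> 'v \<Rightarrow> 'v \<Rightarrow> real" where
  "graph_dist adj \<epsilon> a b = (if a = b then 0 else if adj a b then 1 else 1 + \<epsilon>)"

lemma metric_on_graph_dist:
  assumes "symp adj" "0 \<le> \<epsilon>" "\<epsilon> \<le> 1"
  shows "metric_on V (graph_dist adj \<epsilon>)"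
  using assms by (auto simp: metric_on_def graph_dist_def symp_def)

lemma s_inv_graph_dist:
  assumes "0 \<le> \<epsilon>" "a \<in> V" "b \<in> V" "a \<noteq> b" "adj a b"
  shows "s_inv V (graph_dist adj \<epsilon>) = 1"
  unfolding s_inv_def
proof (rule cInf_eq_minimum)
  show "1 \<in> {graph_dist adj \<epsilon> x x' | x x'. x \<in> V \<and> x' \<in> V \<and> x \<noteq> x'}"
    using assms by (force simp: graph_dist_def)
qed (use assms in \<open>auto simp: graph_dist_def\<close>)

lemma t_inv_graph_dist:
  assumes "0 \<le> \<epsilon>" "a \<in> V" "b \<in> V" "c \<in> V" "a \<noteq> b" "b \<noteq> c" "a \<noteq> c"
    and "adj a b" "adj b c" "\<not> adj a c"
  shows "t_inv V (graph_dist adj \<epsilon>) = 1 - \<epsilon>"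
  unfolding t_inv_def
proof (rule cInf_eq_minimum)
  have "graph_dist adj \<epsilon> a b + graph_dist adj \<epsilon> b c - graph_dist adj \<epsilon> a c = 1 - \<epsilon>"
    using assms by (simp add: graph_dist_def)
  then show "1 - \<epsilon> \<in> {graph_dist adj \<epsilon> x x' + graph_dist adj \<epsilon> x' x'' - graph_dist adj \<epsilon> x x'' |
      x x' x''. x \<in> V \<and> x' \<in> V \<and> x'' \<in> V \<and> x \<noteq> x' \<and> x' \<noteq> x'' \<and> x \<noteq> x''}"
    using assms by (intro CollectI exI[of _ a] exI[of _ b] exI[of _ c]) simp
qed (use assms in \<open>auto simp: graph_dist_def\<close>)

lemma dis_graph_dist_le:
  assumes "0 \<le> \<epsilon>" "inj_on f V"
  shows "dis V (graph_dist adj \<epsilon>) f \<le> ereal \<epsilon>"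
  unfolding dis_def
proof (rule SUP_least)
  fix p assume "p \<in> V \<times> V"
  then have "f (fst p) = f (snd p) \<longleftrightarrow> fst p = snd p"
    using assms(2) by (auto dest: inj_onD)
  then show "ereal \<bar>graph_dist adj \<epsilon> (fst p) (snd p) -
      graph_dist adj \<epsilon> (f (fst p)) (f (snd p))\<bar> \<le> ereal \<epsilon>"
    using assms(1) by (auto simp: graph_dist_def)
qed

lemma dis_graph_dist_ge:
  assumes "0 \<le> \<epsilon>" "\<forall>v\<in>V. \<not> adj v v" "bij_betw f V V" "\<not> graph_aut V adj f"
  shows "ereal \<epsilon> \<le> dis V (graph_dist adj \<epsilon>) f"
proof -
  obtain a b where ab: "a \<in> V" "b \<in> V" "adj (f a) (f b) \<noteq> adj a b"
    using assms(3,4) by (auto simp: graph_aut_def)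
  have "a \<noteq> b" "f a \<in> V"
    using ab assms(2,3) by (auto dest: bij_betwE)
  then have "f a \<noteq> f b"
    using ab assms(3) by (auto simp: bij_betw_def dest: inj_onD)
  with \<open>a \<noteq> b\<close> ab(3) assms(1)
  have "\<epsilon> = \<bar>graph_dist adj \<epsilon> (fst (a, b)) (snd (a, b)) -
      graph_dist adj \<epsilon> (f (fst (a, b))) (f (snd (a, b)))\<bar>"
    by (auto simp: graph_dist_def)
  also have "ereal \<dots> \<le> dis V (graph_dist adj \<epsilon>) f"
    unfolding dis_def by (rule SUP_upper) (use ab in simp)
  finally show ?thesis .
qed

lemma e_inv_graph_dist:
  assumes "0 \<le> \<epsilon>" "\<forall>v\<in>V. \<not> adj v v"
    and rigid: "\<And>f. graph_aut V adj f \<Longrightarrow> \<forall>v\<in>V. f v = v"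
    and "a \<in> V" "b \<in> V" "a \<noteq> b"
  shows "e_inv V (graph_dist adj \<epsilon>) = ereal \<epsilon>"
  unfolding e_inv_def
proof (rule antisym)
  let ?swap = "\<lambda>v. if v = a then b else if v = b then a else v"
  have "bij_betw ?swap V V" "?swap a \<noteq> a"
    using assms(4-6) by (auto simp: bij_betw_def inj_on_def image_def)
  then show "(INF f \<in> {f. bij_betw f V V \<and> (\<exists>x\<in>V. f x \<noteq> x)}. dis V (graph_dist adj \<epsilon>) f)
      \<le> ereal \<epsilon>"
    using assms(1,4) by (intro INF_lower2[of ?swap]) (auto intro!: dis_graph_dist_le bij_betw_imp_inj_on)
  show "ereal \<epsilon> \<le> (INF f \<in> {f. bij_betw f V V \<and> (\<exists>x\<in>V. f x \<noteq> x)}. dis V (graph_dist adj \<epsilon>) f)"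
    using assms(1,2) rigid by (intro INF_greatest) (blast intro: dis_graph_dist_ge)
qed

lemma generic_graph_dist:
  assumes "symp adj" "\<forall>v\<in>V. \<not> adj v v"
    and "\<And>f. graph_aut V adj f \<Longrightarrow> \<forall>v\<in>V. f v = v"
    and path: "a \<in> V" "b \<in> V" "c \<in> V" "a \<noteq> c" "adj a b" "adj b c" "\<not> adj a c"
    and "0 < \<epsilon>" "\<epsilon> < 1"
  shows "generic V (graph_dist adj \<epsilon>)
    \<and> s_inv V (graph_dist adj \<epsilon>) = 1
    \<and> t_inv V (graph_dist adj \<epsilon>) = 1 - \<epsilon>
    \<and> e_inv V (graph_dist adj \<epsilon>) = ereal \<epsilon>"
proof -
  have "a \<noteq> b" "b \<noteq> c"
    using assms(2) path by auto
  have "card {a, b, c} \<le> card V" if "finite V"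
    using that path by (intro card_mono) auto
  then have "infinite V \<or> 3 \<le> card V"
    using \<open>a \<noteq> b\<close> \<open>b \<noteq> c\<close> \<open>a \<noteq> c\<close> by auto
  moreover have "s_inv V (graph_dist adj \<epsilon>) = 1"
    using assms \<open>a \<noteq> b\<close> by (intro s_inv_graph_dist) auto
  moreover have "t_inv V (graph_dist adj \<epsilon>) = 1 - \<epsilon>"
    using assms \<open>a \<noteq> b\<close> \<open>b \<noteq> c\<close> by (intro t_inv_graph_dist) auto
  moreover have "e_inv V (graph_dist adj \<epsilon>) = ereal \<epsilon>"
    using assms \<open>a \<noteq> b\<close> by (intro e_inv_graph_dist) auto
  moreover have "metric_on V (graph_dist adj \<epsilon>)"
    using assms by (intro metric_on_graph_dist) auto
  ultimately show ?thesis
    using assms by (simp add: generic_def)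
qed

lemma graph_aut_neighbours:
  assumes "graph_aut V adj f" "\<And>a b. adj a b \<Longrightarrow> b \<in> V" "a \<in> V"
  shows "{b. adj (f a) b} = f ` {b. adj a b}"
proof -
  have V: "f ` V = V" "\<And>b. b \<in> V \<Longrightarrow> adj (f a) (f b) \<longleftrightarrow> adj a b"
    using assms(1,3) by (auto simp: graph_aut_def bij_betw_def)
  show ?thesis
  proof (intro set_eqI iffI)
    fix c assume "c \<in> {b. adj (f a) b}"
    then obtain b where "b \<in> V" "c = f b" "adj (f a) (f b)"
      using assms(2) V(1) by fastforce
    then show "c \<in> f ` {b. adj a b}"
      using V(2) by blast
  qed (use assms(2) V(2) in blast)
qed

lemma graph_aut_card_neighbours:
  assumes "graph_aut V adj f" "\<And>a b. adj a b \<Longrightarrow> b \<in> V" "a \<in> V"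
  shows "card {b. adj (f a) b} = card {b. adj a b}"
proof -
  have "inj_on f {b. adj a b}"
    using assms(1,2) by (auto simp: graph_aut_def bij_betw_def intro: inj_on_subset)
  then show ?thesis
    using graph_aut_neighbours[OF assms] by (simp add: card_image)
qed

lemma well_order_on_automorphism_id:
  assumes wo: "well_order_on X r" and bij: "bij_betw g X X"
    and mono: "\<And>x y. x \<in> X \<Longrightarrow> y \<in> X \<Longrightarrow> sless r x y \<Longrightarrow> sless r (g x) (g y)"
  shows "\<forall>x\<in>X. g x = x"
proof (rule ccontr)
  have wf: "wf (r - Id)" and tot: "total_on X r" and anti: "antisym r"
    using wo by (auto simp: well_order_on_def linear_order_on_def partial_order_on_def)
  have less: "sless r x y \<or> sless r y x" if "x \<in> X" "y \<in> X" "x \<noteq> y" for x y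
    using tot that by (auto simp: total_on_def sless_def)
  assume "\<not> (\<forall>x\<in>X. g x = x)"
  then obtain x0 where "x0 \<in> {x \<in> X. g x \<noteq> x}"
    by blast
  then obtain x where x: "x \<in> X" "g x \<noteq> x"
    and least: "\<And>y. (y, x) \<in> r - Id \<Longrightarrow> y \<in> X \<Longrightarrow> g y = y"
    by (rule wfE_min[OF wf]) blast
  have gx: "g x \<in> X"
    using bij x(1) by (auto dest: bij_betwE)
  obtain z where z: "z \<in> X" "g z = x"
    using bij x(1) by (metis bij_betw_iff_bijections)
  consider (below) "sless r (g x) x" | (above) "sless r x (g x)"
    using less[OF gx x(1)] x(2) by blast
  then show False
  proof cases
    case below
    then have "g (g x) = g x"
      using least gx by (simp add: sless_def)
    then show False
      using x gx bij by (auto simp: bij_betw_def dest: inj_onD)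
  next
    case above
    have "z \<noteq> x"
      using z x(2) by auto
    then consider (z_below) "sless r z x" | (z_above) "sless r x z"
      using less z(1) x(1) by blast
    then show False
    proof cases
      case z_below
      then show False
        using least[of z] z \<open>z \<noteq> x\<close> by (simp add: sless_def)
    next
      case z_above
      have "sless r (g x) x"
        using mono[OF x(1) z(1) z_above] z(2) by simp
      with above anti show False
        by (auto simp: sless_def antisym_def)
    qed
  qed
qed

lemma mem_Go_edges_iff: "(x, y) \<in> Go_edges X r \<longleftrightarrow> x \<in> X \<and> y \<in> X \<and> sless r x y"
  by (simp add: Go_edges_def)

lemma Go_edges_total:
  assumes "total_on X r" "x \<in> X" "y \<in> X" "x \<noteq> y"
  shows "(x, y) \<in> Go_edges X r \<or> (y, x) \<in> Go_edges X r"
  using assms by (auto simp: total_on_def mem_Go_edges_iff sless_def)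

lemma Go_edges_nonempty:
  assumes "infinite X" "total_on X r"
  obtains x y where "(x, y) \<in> Go_edges X r"
proof -
  obtain x where "x \<in> X"
    using assms(1) infinite_imp_nonempty by blast
  moreover obtain y where "y \<in> X" "y \<noteq> x"
    using assms(1) infinite_imp_nonempty[of "X - {x}"] by auto
  ultimately show ?thesis
    using that Go_edges_total[OF assms(2)] by metis
qed

lemma mem_VH_iff [simp]:
  "Orig x \<in> VH X r \<longleftrightarrow> x \<in> X"
  "UV x y \<in> VH X r \<longleftrightarrow> (x, y) \<in> Go_edges X r"
  "VV x y \<in> VH X r \<longleftrightarrow> (x, y) \<in> Go_edges X r"
  "WV x y \<in> VH X r \<longleftrightarrow> (x, y) \<in> Go_edges X r"
  by (auto simp: VH_def)

lemma adjH_simps [simp]: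
  "adjH X r (Orig a) (Orig b) = False"
  "adjH X r (Orig a) (UV c d) = ((c, d) \<in> Go_edges X r \<and> a = c)"
  "adjH X r (Orig a) (VV c d) = ((c, d) \<in> Go_edges X r \<and> a = d)"
  "adjH X r (Orig a) (WV c d) = False"
  "adjH X r (UV a b) (Orig c) = ((a, b) \<in> Go_edges X r \<and> c = a)"
  "adjH X r (UV a b) (UV c d) = False"
  "adjH X r (UV a b) (VV c d) = ((a, b) \<in> Go_edges X r \<and> c = a \<and> d = b)"
  "adjH X r (UV a b) (WV c d) = False"
  "adjH X r (VV a b) (Orig c) = ((a, b) \<in> Go_edges X r \<and> c = b)"
  "adjH X r (VV a b) (UV c d) = ((a, b) \<in> Go_edges X r \<and> c = a \<and> d = b)"
  "adjH X r (VV a b) (VV c d) = False"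
  "adjH X r (VV a b) (WV c d) = ((a, b) \<in> Go_edges X r \<and> c = a \<and> d = b)"
  "adjH X r (WV a b) (Orig c) = False"
  "adjH X r (WV a b) (UV c d) = False"
  "adjH X r (WV a b) (VV c d) = ((c, d) \<in> Go_edges X r \<and> a = c \<and> b = d)"
  "adjH X r (WV a b) (WV c d) = False"
  by (auto simp: adjH_def Ho_edges_def)

lemma symp_adjH: "symp (adjH X r)"
  by (auto simp: symp_def adjH_def)

lemma adjH_irrefl: "\<not> adjH X r v v"
  by (cases v) (auto simp: mem_Go_edges_iff sless_def)

lemma adjH_imp_mem_VH: "adjH X r a b \<Longrightarrow> b \<in> VH X r"
  by (cases a; cases b) (auto simp: mem_Go_edges_iff)

lemma infinite_adjH_Orig:
  assumes "infinite X" "well_order_on X r" "x \<in> X"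
  shows "infinite {b. adjH X r (Orig x) b}"
proof
  assume fin: "finite {b. adjH X r (Orig x) b}"
  define \<phi> where "\<phi> y = (if sless r x y then UV x y else VV y x)" for y
  have "total_on X r"
    using assms(2) by (simp add: well_order_on_def linear_order_on_def)
  then have "adjH X r (Orig x) (\<phi> y)" if "y \<in> X - {x}" for y
    using that assms(3) Go_edges_total[of X r x y] by (auto simp: \<phi>_def mem_Go_edges_iff)
  then have "\<phi> ` (X - {x}) \<subseteq> {b. adjH X r (Orig x) b}"
    by blast
  moreover have "inj_on \<phi> (X - {x})"
    by (rule inj_onI) (auto simp: \<phi>_def split: if_splits)
  ultimately have "finite (X - {x})"
    using fin by (metis finite_imageD finite_subset)
  then show False
    using assms(1) by simp
qed

text \<open>The degree of a vertex of \<open>H\<close>; vertices \<open>Orig x\<close> have infinite degree, which \<open>card\<close> reports as 0.\<close>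

primrec hvert_degree :: "'a hvert \<Rightarrow> nat" where
  "hvert_degree (Orig x) = 0"
| "hvert_degree (UV x y) = 2"
| "hvert_degree (VV x y) = 3"
| "hvert_degree (WV x y) = 1"

lemma card_adjH_neighbours:
  assumes "infinite X" "well_order_on X r" "v \<in> VH X r"
  shows "card {b. adjH X r v b} = hvert_degree v"
proof (cases v)
  case (Orig x)
  then have "infinite {b. adjH X r v b}"
    using assms infinite_adjH_Orig by simp
  then show ?thesis
    using Orig by simp
next
  case (UV x y)
  have "adjH X r v b \<longleftrightarrow> b \<in> {Orig x, VV x y}" for b
    using assms(3) UV by (cases b) auto
  then have "{b. adjH X r v b} = {Orig x, VV x y}"
    by blast
  then show ?thesis
    using UV by simp
next
  case (VV x y)
  have "adjH X r v b \<longleftrightarrow> b \<in> {UV x y, Orig y, WV x y}" for b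
    using assms(3) VV by (cases b) auto
  then have "{b. adjH X r v b} = {UV x y, Orig y, WV x y}"
    by blast
  then show ?thesis
    using VV by simp
next
  case (WV x y)
  have "adjH X r v b \<longleftrightarrow> b \<in> {VV x y}" for b
    using assms(3) WV by (cases b) auto
  then have "{b. adjH X r v b} = {VV x y}"
    by blast
  then show ?thesis
    using WV by simp
qed

lemma graph_aut_hvert_degree:
  assumes "infinite X" "well_order_on X r" "graph_aut (VH X r) (adjH X r) f" "v \<in> VH X r"
  shows "hvert_degree (f v) = hvert_degree v"
proof -
  have "f v \<in> VH X r"
    using assms(3,4) by (auto simp: graph_aut_def dest: bij_betwE)
  then have "hvert_degree (f v) = card {b. adjH X r (f v) b}"
    using assms(1,2) by (simp add: card_adjH_neighbours)
  also have "\<dots> = card {b. adjH X r v b}"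
    using assms(3) adjH_imp_mem_VH assms(4) by (rule graph_aut_card_neighbours)
  also have "\<dots> = hvert_degree v"
    using assms(1,2,4) by (rule card_adjH_neighbours)
  finally show ?thesis .
qed

lemma graph_aut_gadget:
  assumes "infinite X" "well_order_on X r" and aut: "graph_aut (VH X r) (adjH X r) f"
    and e: "(x, y) \<in> Go_edges X r" and "f (Orig x) = Orig x'" "f (Orig y) = Orig y'"
  shows "(x', y') \<in> Go_edges X r \<and> f (UV x y) = UV x' y' \<and> f (VV x y) = VV x' y'
    \<and> f (WV x y) = WV x' y'"
proof -
  have adj: "adjH X r (f a) (f b)" if "adjH X r a b" "a \<in> VH X r" for a b
    using aut that adjH_imp_mem_VH[OF that(1)] unfolding graph_aut_def by blast
  have deg: "hvert_degree (f v) = hvert_degree v" if "v \<in> VH X r" for v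
    using graph_aut_hvert_degree[OF assms(1-3) that] .
  have xy: "x \<in> X" "y \<in> X"
    using e by (auto simp: mem_Go_edges_iff)
  obtain a b where U: "f (UV x y) = UV a b"
    using deg[of "UV x y"] e by (cases "f (UV x y)") auto
  obtain c d where V: "f (VV x y) = VV c d"
    using deg[of "VV x y"] e by (cases "f (VV x y)") auto
  obtain p q where W: "f (WV x y) = WV p q"
    using deg[of "WV x y"] e by (cases "f (WV x y)") auto
  have "a = x'" "(a, b) \<in> Go_edges X r"
    using adj[of "Orig x" "UV x y"] e xy U assms(5) by auto
  moreover have "c = a" "d = b"
    using adj[of "UV x y" "VV x y"] e U V by auto
  moreover have "d = y'"
    using adj[of "VV x y" "Orig y"] e V assms(6) by auto
  moreover have "p = c" "q = d"
    using adj[of "VV x y" "WV x y"] e V W by auto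
  ultimately show ?thesis
    using U V W by simp
qed

lemma graph_aut_VH_id:
  assumes inf: "infinite X" and wo: "well_order_on X r"
    and aut: "graph_aut (VH X r) (adjH X r) f"
  shows "\<forall>v\<in>VH X r. f v = v"
proof -
  have bij: "bij_betw f (VH X r) (VH X r)"
    using aut by (simp add: graph_aut_def)
  have "\<forall>x\<in>X. \<exists>z\<in>X. f (Orig x) = Orig z"
  proof
    fix x assume "x \<in> X"
    then have "f (Orig x) \<in> VH X r" "hvert_degree (f (Orig x)) = 0"
      using graph_aut_hvert_degree[OF inf wo aut] bij by (auto dest: bij_betwE)
    then show "\<exists>z\<in>X. f (Orig x) = Orig z"
      by (cases "f (Orig x)") auto
  qed
  then obtain g where g: "\<And>x. x \<in> X \<Longrightarrow> g x \<in> X \<and> f (Orig x) = Orig (g x)"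
    by metis
  have gadget: "(g x, g y) \<in> Go_edges X r \<and> f (UV x y) = UV (g x) (g y)
      \<and> f (VV x y) = VV (g x) (g y) \<and> f (WV x y) = WV (g x) (g y)"
    if "(x, y) \<in> Go_edges X r" for x y
    using that g graph_aut_gadget[OF inf wo aut that] by (simp add: mem_Go_edges_iff)
  have "inj_on g X"
  proof (rule inj_onI)
    fix x y assume "x \<in> X" "y \<in> X" "g x = g y"
    then have "f (Orig x) = f (Orig y)"
      using g by simp
    then show "x = y"
      using bij \<open>x \<in> X\<close> \<open>y \<in> X\<close> by (auto simp: bij_betw_def dest: inj_onD)
  qed
  moreover have "X \<subseteq> g ` X"
  proof
    fix z assume "z \<in> X"
    then obtain v where v: "v \<in> VH X r" "f v = Orig z"
      using bij by (metis bij_betw_iff_bijections mem_VH_iff(1))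
    then have "hvert_degree v = 0"
      using graph_aut_hvert_degree[OF inf wo aut v(1)] by simp
    then show "z \<in> g ` X"
      using v g by (cases v) force+
  qed
  ultimately have "bij_betw g X X"
    using g by (auto simp: bij_betw_def)
  then have id: "\<forall>x\<in>X. g x = x"
    using wo gadget by (intro well_order_on_automorphism_id) (auto simp: mem_Go_edges_iff)
  show ?thesis
  proof
    fix v assume "v \<in> VH X r"
    then show "f v = v"
      using g gadget id by (cases v) (auto simp: mem_Go_edges_iff)
  qed
qed

primrec hvert_code :: "'a hvert \<Rightarrow> nat \<times> 'a \<times> 'a" where
  "hvert_code (Orig x) = (0, x, x)"
| "hvert_code (UV x y) = (1, x, y)"
| "hvert_code (VV x y) = (2, x, y)"
| "hvert_code (WV x y) = (3, x, y)"

lemma VH_eqpoll: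
  assumes "infinite X"
  shows "VH X r \<approx> X"
proof (rule lepoll_antisym)
  show "X \<lesssim> VH X r"
    unfolding lepoll_def by (intro exI[of _ Orig]) (auto simp: inj_on_def)
  have "inj hvert_code"
    by (rule injI, case_tac x; case_tac y) auto
  moreover have "hvert_code ` VH X r \<subseteq> {..<4} \<times> X \<times> X"
    by (rule image_subsetI, case_tac x) (auto simp: mem_Go_edges_iff)
  ultimately have "VH X r \<lesssim> {..<4::nat} \<times> X \<times> X"
    unfolding lepoll_def by (blast intro: inj_on_subset)
  also have "{..<4::nat} \<times> X \<times> X \<lesssim> X \<times> X \<times> X"
    using assms by (intro times_lepoll_mono finite_lepoll_infinite lepoll_refl) auto
  also have "X \<times> X \<times> X \<approx> X"
  proof -
    have sq: "X \<times> X \<approx> X"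
      using card_of_Times_same_infinite[OF assms] eqpoll_iff_card_of_ordIso by blast
    then have "X \<times> X \<times> X \<approx> X \<times> X"
      by (rule times_eqpoll_cong[OF eqpoll_refl])
    then show ?thesis
      using sq eqpoll_trans by blast
  qed
  finally show "VH X r \<lesssim> X" .
qed

lemma dH_eq_graph_dist: "dH X r \<epsilon> = graph_dist (adjH X r) \<epsilon>"
  by (simp add: fun_eq_iff dH_def graph_dist_def)

theorem mainTheorem19:
  fixes X :: "'a set" and r :: "'a rel"
  assumes "infinite X" and "well_order_on X r"
  shows "(\<forall>f. graph_aut (VH X r) (adjH X r) f \<longrightarrow> (\<forall>v\<in>VH X r. f v = v))
     \<and> VH X r \<approx> X
     \<and> (\<forall>\<epsilon>::real. 0 < \<epsilon> \<and> \<epsilon> < 1 \<longrightarrow>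
          generic (VH X r) (dH X r \<epsilon>)
          \<and> s_inv (VH X r) (dH X r \<epsilon>) = 1
          \<and> t_inv (VH X r) (dH X r \<epsilon>) = 1 - \<epsilon>
          \<and> e_inv (VH X r) (dH X r \<epsilon>) = ereal \<epsilon>)"
proof -
  have rigid: "\<And>f. graph_aut (VH X r) (adjH X r) f \<Longrightarrow> \<forall>v\<in>VH X r. f v = v"
    using graph_aut_VH_id[OF assms] by blast
  have "total_on X r"
    using assms(2) by (simp add: well_order_on_def linear_order_on_def)
  then obtain x y where e: "(x, y) \<in> Go_edges X r"
    using assms(1) Go_edges_nonempty by blast
  have "generic (VH X r) (graph_dist (adjH X r) \<epsilon>)
      \<and> s_inv (VH X r) (graph_dist (adjH X r) \<epsilon>) = 1
      \<and> t_inv (VH X r) (graph_dist (adjH X r) \<epsilon>) = 1 - \<epsilon>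
      \<and> e_inv (VH X r) (graph_dist (adjH X r) \<epsilon>) = ereal \<epsilon>" if "0 < \<epsilon>" "\<epsilon> < 1" for \<epsilon>
    using e that rigid
    by (intro generic_graph_dist[where a = "Orig x" and b = "UV x y" and c = "VV x y"])
      (auto simp: symp_adjH adjH_irrefl mem_Go_edges_iff sless_def)
  then show ?thesis
    using rigid VH_eqpoll[OF assms(1)] by (simp add: dH_eq_graph_dist)
qed

end
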